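(* Let $G$ be any finite simple graph, connected or not. Then there exists a connected distance exceptional graph $G''$ containing a copy of $G$ as an induced subgraph. If moreover $G$ is connected and $\iota(G)<\infty$, then $G''$ can be chosen so that this copy is isometric, i.e. $d_{G''}(u,v)=d_G(u,v)$ for all $u,v\in V(G)$.
   Context: For a connected graph $G$ on vertices $v_1,\dots,v_n$, its distance matrix is $D=(d(v_i,v_j))_{i,j=1}^n$, where $d$ is the shortest-path distance; $\vec 1$ denotes the all-ones vector. $G$ is distance exceptional if $D\vec x=\vec 1$ has no solution. A curvature potential is a vector $\vec x$ with $D\vec x=\vec 1$. Curvature index $\iota(G)\in\mathbb{R}\cup\{\infty\}$: if $G$ is distance exceptional or has a curvature potential $\vec x$ with $\vec 1^\top\vec x\neq0$, then $\iota(G)$ is the unique real number with $\{D\vec x:\vec 1^\top\vec x=1\}\cap\mathbb{R}\vec 1=\{\iota(G)\vec 1\}$; otherwise $\iota(G)=\infty$. *)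

theory Defs
  imports "HOL-Analysis.Analysis"
begin

definition simple_graph :: "'a set \<Rightarrow> ('a \<Rightarrow> 'a \<Rightarrow> bool) \<Rightarrow> bool" where
  "simple_graph V E \<longleftrightarrow> finite V \<and> (\<forall>x y. E x y \<longrightarrow> x \<in> V \<and> y \<in> V)
     \<and> (\<forall>x y. E x y \<longrightarrow> E y x) \<and> (\<forall>x. \<not> E x x)"

definition connected_graph :: "'a set \<Rightarrow> ('a \<Rightarrow> 'a \<Rightarrow> bool) \<Rightarrow> bool" where
  "connected_graph V E \<longleftrightarrow> V \<noteq> {} \<and> (\<forall>u\<in>V. \<forall>v\<in>V. E\<^sup>*\<^sup>* u v)"

definition gdist :: "('a \<Rightarrow> 'a \<Rightarrow> bool) \<Rightarrow> 'a \<Rightarrow> 'a \<Rightarrow> nat" where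
  "gdist E u v = (LEAST n. (E ^^ n) u v)"

definition dist_mult :: "'a set \<Rightarrow> ('a \<Rightarrow> 'a \<Rightarrow> bool) \<Rightarrow> ('a \<Rightarrow> real) \<Rightarrow> ('a \<Rightarrow> real)" where
  "dist_mult V E x = (\<lambda>u. if u \<in> V then (\<Sum>v\<in>V. real (gdist E u v) * x v) else 0)"

definition const_vec :: "'a set \<Rightarrow> real \<Rightarrow> ('a \<Rightarrow> real)" where
  "const_vec V t = (\<lambda>u. if u \<in> V then t else 0)"

definition curvature_potential :: "'a set \<Rightarrow> ('a \<Rightarrow> 'a \<Rightarrow> bool) \<Rightarrow> ('a \<Rightarrow> real) \<Rightarrow> bool" where
  "curvature_potential V E x \<longleftrightarrow> dist_mult V E x = const_vec V 1"

definition distance_exceptional :: "'a set \<Rightarrow> ('a \<Rightarrow> 'a \<Rightarrow> bool) \<Rightarrow> bool" where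
  "distance_exceptional V E \<longleftrightarrow> \<not> (\<exists>x. curvature_potential V E x)"

definition curvature_index :: "'a set \<Rightarrow> ('a \<Rightarrow> 'a \<Rightarrow> bool) \<Rightarrow> ereal" where
  "curvature_index V E =
     (if distance_exceptional V E \<or> (\<exists>x. curvature_potential V E x \<and> (\<Sum>v\<in>V. x v) \<noteq> 0)
      then ereal (THE t. {dist_mult V E x | x. (\<Sum>v\<in>V. x v) = 1} \<inter> range (const_vec V)
                          = {const_vec V t})
      else \<infinity>)"

definition induced_embedding ::
  "'a set \<Rightarrow> ('a \<Rightarrow> 'a \<Rightarrow> bool) \<Rightarrow> 'b set \<Rightarrow> ('b \<Rightarrow> 'b \<Rightarrow> bool) \<Rightarrow> ('a \<Rightarrow> 'b) \<Rightarrow> bool" where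
  "induced_embedding V E V' E' f \<longleftrightarrow> inj_on f V \<and> f ` V \<subseteq> V'
     \<and> (\<forall>u\<in>V. \<forall>v\<in>V. E' (f u) (f v) \<longleftrightarrow> E u v)"

end

theory Submission
  imports Defs
begin

text \<open>If G is connected with finite curvature index, either G is already distance exceptional,
  or a curvature potential of nonzero sum, rescaled, is a vector w of total weight 1 with
  D w = t 1, and t = \<iota>(G) is rational. A complete multipartite graph B carries such a vector z
  with D z = -t 1. In the one-point union of G and B, which contains G isometrically, the vector
  w + z - e (e the unit vector at the glued vertex) has total weight 1 and lies in the kernel of
  the distance matrix; by symmetry of D this is impossible for a graph with a curvature
  potential. An arbitrary G is first made connected by adding k universal vertices forming a
  clique, which caps the distances in G at 2; for k = 1 or k = 2 the result has finite
  curvature index.\<close>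

section \<open>Walks and distances\<close>

lemma simple_graph_finite: "simple_graph V E \<Longrightarrow> finite V"
  unfolding simple_graph_def by blast

lemma simple_graph_edgeD: "simple_graph V E \<Longrightarrow> E x y \<Longrightarrow> x \<in> V \<and> y \<in> V"
  unfolding simple_graph_def by blast

lemma simple_graph_sym: "simple_graph V E \<Longrightarrow> E x y \<Longrightarrow> E y x"
  unfolding simple_graph_def by blast

lemma simple_graph_irrefl: "simple_graph V E \<Longrightarrow> \<not> E x x"
  unfolding simple_graph_def by blast

lemma connected_graph_relpowp:
  "connected_graph V E \<Longrightarrow> u \<in> V \<Longrightarrow> v \<in> V \<Longrightarrow> \<exists>n. (E^^n) u v"
  unfolding connected_graph_def by (metis rtranclp_imp_relpowp)

lemma relpowp_sym:
  assumes "\<And>x y. E x y \<Longrightarrow> E y x"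
  shows "(E^^n) u v \<Longrightarrow> (E^^n) v u"
proof (induction n arbitrary: v)
  case 0 thus ?case by simp
next
  case (Suc n)
  then obtain w where "(E^^n) u w" "E w v" by (auto elim: relpowp_Suc_E)
  then show ?case using Suc.IH assms by (meson relpowp_Suc_I2)
qed

lemma relpowp_map:
  assumes "\<And>p q. E p q \<Longrightarrow> E' (f p) (f q)"
  shows "(E^^n) u v \<Longrightarrow> (E'^^n) (f u) (f v)"
proof (induction n arbitrary: v)
  case 0 thus ?case by simp
next
  case (Suc n)
  then obtain w where "(E^^n) u w" "E w v" by (auto elim: relpowp_Suc_E)
  then show ?case using Suc.IH[of w] assms by (meson relpowp_Suc_I)
qed

lemma gdist_sym:
  assumes "\<And>x y. E x y \<Longrightarrow> E y x"
  shows "gdist E u v = gdist E v u"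
  unfolding gdist_def using relpowp_sym[of E, OF assms] by metis

lemma gdist_le: "(E^^n) u v \<Longrightarrow> gdist E u v \<le> n"
  unfolding gdist_def by (rule Least_le)

lemma relpowp_gdist: "(E^^n) u v \<Longrightarrow> (E^^(gdist E u v)) u v"
  unfolding gdist_def by (rule LeastI)

lemma gdist_self [simp]: "gdist E u u = 0"
  using gdist_le[of 0 E u u] by simp

lemma gdist_eq_0D: "(E^^n) u v \<Longrightarrow> gdist E u v = 0 \<Longrightarrow> u = v"
  using relpowp_gdist[of n E u v] by simp

lemma connected_graph_relpowp_gdist:
  "connected_graph V E \<Longrightarrow> u \<in> V \<Longrightarrow> v \<in> V \<Longrightarrow> (E^^(gdist E u v)) u v"
  using connected_graph_relpowp relpowp_gdist by metis

lemma gdist_step_le: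
  assumes "(E^^n) s p" "E p q"
  shows "gdist E s q \<le> gdist E s p + 1"
proof -
  have "(E^^(Suc (gdist E s p))) s q"
    using relpowp_gdist[OF assms(1)] assms(2) by (rule relpowp_Suc_I)
  then show ?thesis using gdist_le by fastforce
qed

lemma gdist_lipschitz:
  assumes "simple_graph V E" "connected_graph V E" "s \<in> V"
  shows "\<forall>p q. E p q \<longrightarrow> gdist E s q \<le> gdist E s p + 1"
proof (intro allI impI)
  fix p q assume pq: "E p q"
  then have "p \<in> V" using simple_graph_edgeD[OF assms(1)] by blast
  then obtain n where "(E^^n) s p" using connected_graph_relpowp[OF assms(2,3)] by blast
  then show "gdist E s q \<le> gdist E s p + 1" using pq by (rule gdist_step_le)
qed

lemma relpowp_lipschitz:
  assumes "\<forall>p q. E p q \<longrightarrow> h q \<le> h p + (1::nat)"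
  shows "(E^^n) u v \<Longrightarrow> h v \<le> h u + n"
proof (induction n arbitrary: v)
  case 0 thus ?case by simp
next
  case (Suc n)
  then obtain w where "(E^^n) u w" "E w v" by (auto elim: relpowp_Suc_E)
  then show ?case using Suc.IH[of w] assms by fastforce
qed

lemma gdist_eqI:
  assumes "(E^^n) u v" "\<forall>p q. E p q \<longrightarrow> h q \<le> h p + (1::nat)" "h u + n \<le> h v"
  shows "gdist E u v = n"
proof -
  have "gdist E u v \<le> n" using assms(1) by (rule gdist_le)
  moreover have "h v \<le> h u + gdist E u v"
    using relpowp_lipschitz[OF assms(2) relpowp_gdist[OF assms(1)]] .
  ultimately show ?thesis using assms(3) by linarith
qed

lemma gdist_edge: "E u v \<Longrightarrow> u \<noteq> v \<Longrightarrow> gdist E u v = 1"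
  using gdist_le[of 1 E u v] gdist_eq_0D[of 1 E u v] by fastforce

lemma gdist_eq_2:
  assumes "E u w" "E w v" "u \<noteq> v" "\<not> E u v"
  shows "gdist E u v = 2"
proof -
  have walk: "(E^^2) u v" using assms(1,2) by (auto simp: numeral_2_eq_2 intro: relpowp_Suc_I2)
  have "gdist E u v \<noteq> 0" using gdist_eq_0D[OF walk] assms(3) by blast
  moreover have "gdist E u v \<noteq> 1" using relpowp_gdist[OF walk] assms(4) by force
  ultimately show ?thesis using gdist_le[OF walk] by linarith
qed

section \<open>Distance matrices\<close>

lemma dist_mult_eq_const_vec_iff:
  "dist_mult V E x = const_vec V t \<longleftrightarrow> (\<forall>u\<in>V. (\<Sum>v\<in>V. real (gdist E u v) * x v) = t)"
  unfolding dist_mult_def const_vec_def fun_eq_iff by auto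

lemma curvature_potential_iff:
  "curvature_potential V E x \<longleftrightarrow> (\<forall>u\<in>V. (\<Sum>v\<in>V. real (gdist E u v) * x v) = 1)"
  unfolding curvature_potential_def dist_mult_eq_const_vec_iff ..

text \<open>In terms of the curvature index: t = \<iota>(G) whenever such a w exists.\<close>

definition index_vector :: "'a set \<Rightarrow> ('a \<Rightarrow> 'a \<Rightarrow> bool) \<Rightarrow> real \<Rightarrow> ('a \<Rightarrow> real) \<Rightarrow> bool" where
  "index_vector V E t w \<longleftrightarrow> (\<Sum>v\<in>V. w v) = 1 \<and> dist_mult V E w = const_vec V t"

lemma index_vector_iff:
  "index_vector V E t w \<longleftrightarrow>
     (\<Sum>v\<in>V. w v) = 1 \<and> (\<forall>u\<in>V. (\<Sum>v\<in>V. real (gdist E u v) * w v) = t)"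
  unfolding index_vector_def dist_mult_eq_const_vec_iff ..

lemma curvature_index_less_infinity_iff:
  "curvature_index V E < \<infinity> \<longleftrightarrow>
     distance_exceptional V E \<or> (\<exists>x. curvature_potential V E x \<and> (\<Sum>v\<in>V. x v) \<noteq> 0)"
  unfolding curvature_index_def by simp

lemma index_vector_of_potential:
  assumes "curvature_potential V E x" "(\<Sum>v\<in>V. x v) = s" "s \<noteq> 0"
  shows "index_vector V E (1 / s) (\<lambda>v. x v / s)"
  unfolding index_vector_iff
proof
  show "(\<Sum>v\<in>V. x v / s) = 1" using assms(2,3) by (simp add: sum_divide_distrib[symmetric])
  show "\<forall>u\<in>V. (\<Sum>v\<in>V. real (gdist E u v) * (x v / s)) = 1 / s"
  proof
    fix u assume "u \<in> V"
    then have "(\<Sum>v\<in>V. real (gdist E u v) * x v) = 1"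
      using assms(1) unfolding curvature_potential_iff by blast
    moreover have "(\<Sum>v\<in>V. real (gdist E u v) * (x v / s)) = (\<Sum>v\<in>V. real (gdist E u v) * x v) / s"
      by (simp add: sum_divide_distrib)
    ultimately show "(\<Sum>v\<in>V. real (gdist E u v) * (x v / s)) = 1 / s" by simp
  qed
qed

lemma sum_bilinear_sym:
  fixes K :: "'a \<Rightarrow> 'a \<Rightarrow> real"
  assumes "\<And>u v. K u v = K v u"
  shows "(\<Sum>u\<in>V. a u * (\<Sum>v\<in>V. K u v * b v)) = (\<Sum>v\<in>V. b v * (\<Sum>u\<in>V. K v u * a u))"
proof -
  have "(\<Sum>u\<in>V. a u * (\<Sum>v\<in>V. K u v * b v)) = (\<Sum>u\<in>V. \<Sum>v\<in>V. a u * K u v * b v)"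
    by (simp add: sum_distrib_left mult.assoc)
  also have "\<dots> = (\<Sum>v\<in>V. \<Sum>u\<in>V. a u * K u v * b v)" by (rule sum.swap)
  also have "\<dots> = (\<Sum>v\<in>V. b v * (\<Sum>u\<in>V. K v u * a u))"
    by (simp add: sum_distrib_left assms mult.commute mult.left_commute)
  finally show ?thesis .
qed

lemma gdist_bilinear_sym:
  assumes "simple_graph V E"
  shows "(\<Sum>u\<in>V. a u * (\<Sum>v\<in>V. real (gdist E u v) * b v))
       = (\<Sum>v\<in>V. b v * (\<Sum>u\<in>V. real (gdist E v u) * a u))"
  by (rule sum_bilinear_sym) (metis gdist_sym simple_graph_sym[OF assms])

text \<open>Pairing a kernel vector y with a potential x: sum y = x' D y = 0 by symmetry of D.\<close>

lemma index_vector_0_imp_distance_exceptional: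
  assumes "simple_graph V E" "index_vector V E 0 y"
  shows "distance_exceptional V E"
  unfolding distance_exceptional_def
proof
  assume "\<exists>x. curvature_potential V E x"
  then obtain x where x: "\<forall>u\<in>V. (\<Sum>v\<in>V. real (gdist E u v) * x v) = 1"
    unfolding curvature_potential_iff by blast
  have y: "(\<Sum>v\<in>V. y v) = 1" "\<forall>u\<in>V. (\<Sum>v\<in>V. real (gdist E u v) * y v) = 0"
    using assms(2) unfolding index_vector_iff by auto
  have "(\<Sum>v\<in>V. y v) = (\<Sum>v\<in>V. y v * (\<Sum>w\<in>V. real (gdist E v w) * x w))"
    using x by simp
  also have "\<dots> = (\<Sum>w\<in>V. x w * (\<Sum>v\<in>V. real (gdist E w v) * y v))"
    by (rule gdist_bilinear_sym[OF assms(1)])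
  also have "\<dots> = 0" using y(2) by simp
  finally show False using y(1) by simp
qed

lemma curvature_potential_sum_unique:
  assumes "simple_graph V E" "curvature_potential V E x" "curvature_potential V E x'"
  shows "(\<Sum>v\<in>V. x v) = (\<Sum>v\<in>V. x' v)"
proof -
  have x: "\<forall>u\<in>V. (\<Sum>v\<in>V. real (gdist E u v) * x v) = 1"
    and x': "\<forall>u\<in>V. (\<Sum>v\<in>V. real (gdist E u v) * x' v) = 1"
    using assms(2,3) unfolding curvature_potential_iff by auto
  have "(\<Sum>v\<in>V. x v) = (\<Sum>v\<in>V. x v * (\<Sum>w\<in>V. real (gdist E v w) * x' w))"
    using x' by simp
  also have "\<dots> = (\<Sum>w\<in>V. x' w * (\<Sum>v\<in>V. real (gdist E w v) * x v))"
    by (rule gdist_bilinear_sym[OF assms(1)])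
  also have "\<dots> = (\<Sum>v\<in>V. x' v)" using x by simp
  finally show ?thesis .
qed

lemma exists_rat_linear_functional:
  "\<exists>g::real \<Rightarrow> rat. g 1 = 1 \<and> (\<forall>x y. g (x + y) = g x + g y) \<and> (\<forall>q x. g (of_rat q * x) = q * g x)"
proof -
  interpret Q1: vector_space "\<lambda>q::rat. \<lambda>x::real. of_rat q * x"
    by unfold_locales (simp_all add: algebra_simps of_rat_add of_rat_mult)
  interpret Q2: vector_space "\<lambda>q::rat. \<lambda>r::rat. q * r"
    by unfold_locales (simp_all add: algebra_simps)
  interpret QP: vector_space_pair "\<lambda>q::rat. \<lambda>x::real. of_rat q * x" "\<lambda>q::rat. \<lambda>r::rat. q * r"
    by unfold_locales
  have "Q1.independent {1::real}"
    by (rule Q1.independent_insertI) (auto simp: Q1.span_empty Q1.independent_empty)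
  then obtain g where g: "Vector_Spaces.linear (\<lambda>q::rat. \<lambda>x::real. of_rat q * x) (\<lambda>q r. q * r) g"
    "\<forall>x\<in>{1::real}. g x = 1"
    using QP.linear_independent_extend[of "{1}" "\<lambda>_. 1"] by blast
  show ?thesis
    by (rule exI[of _ g]) (use g QP.linear_add[OF g(1)] QP.linear_scale[OF g(1)] in auto)
qed

text \<open>Since D has integer entries, applying such a functional g entrywise to a potential x gives
  a rational potential x'; by uniqueness of the total weight, sum x = sum x' = g (sum x).\<close>

lemma curvature_potential_sum_rational:
  assumes "simple_graph V E" "curvature_potential V E x"
  shows "(\<Sum>v\<in>V. x v) \<in> \<rat>"
proof -
  obtain g :: "real \<Rightarrow> rat" where g1: "g 1 = 1" and g_add: "\<And>x y. g (x + y) = g x + g y"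
    and g_scale: "\<And>q x. g (of_rat q * x) = q * g x"
    using exists_rat_linear_functional by blast
  have g_sum: "g (sum f A) = (\<Sum>a\<in>A. g (f a))" for f :: "'a \<Rightarrow> real" and A
    using g_add[of 0 0] by (induction A rule: infinite_finite_induct) (simp_all add: g_add)
  have g_nat_scale: "real_of_rat (g (real n * y)) = real n * real_of_rat (g y)" for n y
    using g_scale[of "of_nat n" y] by (simp add: of_rat_mult)
  define x' where "x' = (\<lambda>v. real_of_rat (g (x v)))"
  have "curvature_potential V E x'"
    unfolding curvature_potential_iff
  proof
    fix u assume "u \<in> V"
    then have "(\<Sum>v\<in>V. real (gdist E u v) * x v) = 1"
      using assms(2) unfolding curvature_potential_iff by blast
    moreover have "(\<Sum>v\<in>V. real (gdist E u v) * x' v)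
        = real_of_rat (g (\<Sum>v\<in>V. real (gdist E u v) * x v))"
      unfolding x'_def g_sum by (simp add: g_nat_scale of_rat_sum)
    ultimately show "(\<Sum>v\<in>V. real (gdist E u v) * x' v) = 1" using g1 by simp
  qed
  then have "(\<Sum>v\<in>V. x v) = (\<Sum>v\<in>V. x' v)"
    using curvature_potential_sum_unique[OF assms] by blast
  also have "\<dots> = real_of_rat (g (\<Sum>v\<in>V. x v))"
    unfolding x'_def g_sum by (simp add: of_rat_sum)
  finally show ?thesis by (simp add: Rats_def)
qed

section \<open>Relabelling vertices\<close>

definition isometric_embedding ::
  "'a set \<Rightarrow> ('a \<Rightarrow> 'a \<Rightarrow> bool) \<Rightarrow> 'b set \<Rightarrow> ('b \<Rightarrow> 'b \<Rightarrow> bool) \<Rightarrow> ('a \<Rightarrow> 'b) \<Rightarrow> bool" where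
  "isometric_embedding V E W F f \<longleftrightarrow> induced_embedding V E W F f
     \<and> (\<forall>u\<in>V. \<forall>v\<in>V. gdist F (f u) (f v) = gdist E u v)"

lemma induced_embedding_comp:
  assumes "induced_embedding U D V E f" "induced_embedding V E W F g"
  shows "induced_embedding U D W F (g \<circ> f)"
  using assms unfolding induced_embedding_def
  by (auto simp: image_subset_iff intro: comp_inj_on inj_on_subset)

lemma isometric_embedding_comp:
  assumes "isometric_embedding U D V E f" "isometric_embedding V E W F g"
  shows "isometric_embedding U D W F (g \<circ> f)"
proof -
  have "f ` U \<subseteq> V" using assms(1) unfolding isometric_embedding_def induced_embedding_def by blast
  then show ?thesis
    using assms induced_embedding_comp[of U D V E f W F g]
    unfolding isometric_embedding_def by (simp add: image_subset_iff)
qed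

definition image_edges :: "('a \<Rightarrow> 'b) \<Rightarrow> 'a set \<Rightarrow> ('a \<Rightarrow> 'a \<Rightarrow> bool) \<Rightarrow> 'b \<Rightarrow> 'b \<Rightarrow> bool" where
  "image_edges g V E p q \<longleftrightarrow> (\<exists>u\<in>V. \<exists>v\<in>V. p = g u \<and> q = g v \<and> E u v)"

context
  fixes V :: "'a set" and E and g :: "'a \<Rightarrow> 'b"
  assumes simple: "simple_graph V E" and inj: "inj_on g V"
begin

lemma image_edges_iff: "u \<in> V \<Longrightarrow> v \<in> V \<Longrightarrow> image_edges g V E (g u) (g v) \<longleftrightarrow> E u v"
  using inj simple_graph_edgeD[OF simple] unfolding image_edges_def inj_on_def by blast

lemma relpowp_image_edges_iff:
  assumes "u \<in> V" "v \<in> V"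
  shows "((image_edges g V E)^^n) (g u) (g v) \<longleftrightarrow> (E^^n) u v"
proof
  show "(E^^n) u v \<Longrightarrow> ((image_edges g V E)^^n) (g u) (g v)"
    by (erule relpowp_map[rotated]) (use simple_graph_edgeD[OF simple] image_edges_iff in blast)
  show "((image_edges g V E)^^n) (g u) (g v) \<Longrightarrow> (E^^n) u v"
    using assms(2)
  proof (induction n arbitrary: v)
    case 0 thus ?case using inj assms(1) by (simp add: inj_on_def)
  next
    case (Suc n)
    then obtain w where w: "((image_edges g V E)^^n) (g u) w" "image_edges g V E w (g v)"
      by (auto elim: relpowp_Suc_E)
    then obtain x y where "x \<in> V" "y \<in> V" "w = g x" "g v = g y" "E x y"
      unfolding image_edges_def by blast
    moreover then have "y = v" using Suc.prems inj by (simp add: inj_on_def)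
    ultimately show ?case using Suc.IH[of x] w by (meson relpowp_Suc_I)
  qed
qed

lemma simple_graph_image: "simple_graph (g ` V) (image_edges g V E)"
proof -
  have "\<not> image_edges g V E p p" for p
    using inj simple_graph_irrefl[OF simple] unfolding image_edges_def inj_on_def by blast
  then show ?thesis
    using simple unfolding simple_graph_def image_edges_def by blast
qed

lemma gdist_image_edges:
  "u \<in> V \<Longrightarrow> v \<in> V \<Longrightarrow> gdist (image_edges g V E) (g u) (g v) = gdist E u v"
  unfolding gdist_def using relpowp_image_edges_iff by simp

lemma isometric_embedding_image: "isometric_embedding V E (g ` V) (image_edges g V E) g"
  unfolding isometric_embedding_def induced_embedding_def
  using inj image_edges_iff gdist_image_edges by simp

lemma connected_graph_image:
  assumes "connected_graph V E"
  shows "connected_graph (g ` V) (image_edges g V E)"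
  unfolding connected_graph_def
proof (intro conjI ballI)
  show "g ` V \<noteq> {}" using assms unfolding connected_graph_def by blast
  fix p q assume "p \<in> g ` V" "q \<in> g ` V"
  then obtain u v where uv: "u \<in> V" "v \<in> V" and "p = g u" "q = g v" by blast
  moreover obtain n where "(E^^n) u v" using connected_graph_relpowp[OF assms uv] by blast
  ultimately show "(image_edges g V E)\<^sup>*\<^sup>* p q"
    using relpowp_image_edges_iff[OF uv] by (blast intro: relpowp_imp_rtranclp)
qed

lemma distance_exceptional_image:
  assumes "distance_exceptional V E"
  shows "distance_exceptional (g ` V) (image_edges g V E)"
  unfolding distance_exceptional_def
proof
  assume "\<exists>x. curvature_potential (g ` V) (image_edges g V E) x"
  then obtain x where x: "curvature_potential (g ` V) (image_edges g V E) x" by blast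
  have "curvature_potential V E (x \<circ> g)"
    unfolding curvature_potential_iff
  proof
    fix u assume u: "u \<in> V"
    have "(\<Sum>v\<in>V. real (gdist E u v) * (x \<circ> g) v)
        = (\<Sum>v\<in>V. real (gdist (image_edges g V E) (g u) (g v)) * x (g v))"
      using u gdist_image_edges by simp
    also have "\<dots> = (\<Sum>w\<in>g ` V. real (gdist (image_edges g V E) (g u) w) * x w)"
      by (simp add: sum.reindex[OF inj])
    also have "\<dots> = 1" using x u unfolding curvature_potential_iff by blast
    finally show "(\<Sum>v\<in>V. real (gdist E u v) * (x \<circ> g) v) = 1" .
  qed
  then show False using assms unfolding distance_exceptional_def by blast
qed

end

lemma exists_nat_copy:
  fixes V :: "'a set"
  assumes "simple_graph V E"
  obtains W :: "nat set" and F g where "simple_graph W F" "isometric_embedding V E W F g"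
    "connected_graph V E \<Longrightarrow> connected_graph W F"
    "distance_exceptional V E \<Longrightarrow> distance_exceptional W F"
proof -
  obtain g :: "'a \<Rightarrow> nat" where g: "inj_on g V"
    using finite_imp_inj_to_nat_seg[OF simple_graph_finite[OF assms]] by metis
  show thesis
    by (rule that[OF simple_graph_image[OF assms g] isometric_embedding_image[OF assms g]
          connected_graph_image[OF assms g] distance_exceptional_image[OF assms g]])
qed

section \<open>One-point unions\<close>

text \<open>The one-point union of two graphs, identifying the vertex a of the left graph with the
  vertex b of the right one: left vertices are tagged Inl, right vertices Inr, except b, which
  becomes Inl a.\<close>

definition wedge_right :: "'a \<Rightarrow> 'b \<Rightarrow> 'b \<Rightarrow> 'a + 'b" where
  "wedge_right a b v = (if v = b then Inl a else Inr v)"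

definition wedge_vertices :: "'a set \<Rightarrow> 'a \<Rightarrow> 'b set \<Rightarrow> 'b \<Rightarrow> ('a + 'b) set" where
  "wedge_vertices VA a VB b = Inl ` VA \<union> wedge_right a b ` VB"

definition wedge_edges ::
  "('a \<Rightarrow> 'a \<Rightarrow> bool) \<Rightarrow> 'a \<Rightarrow> ('b \<Rightarrow> 'b \<Rightarrow> bool) \<Rightarrow> 'b \<Rightarrow> 'a + 'b \<Rightarrow> 'a + 'b \<Rightarrow> bool" where
  "wedge_edges EA a EB b p q \<longleftrightarrow>
     (\<exists>u v. p = Inl u \<and> q = Inl v \<and> EA u v)
     \<or> (\<exists>u v. p = wedge_right a b u \<and> q = wedge_right a b v \<and> EB u v)"

text \<open>The sum of two vectors on the two parts, corrected by -1 at the identified vertex so that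
  the total weight of two vectors of weight 1 is again 1.\<close>

definition wedge_vector :: "'a \<Rightarrow> ('a \<Rightarrow> real) \<Rightarrow> 'b \<Rightarrow> ('b \<Rightarrow> real) \<Rightarrow> 'a + 'b \<Rightarrow> real" where
  "wedge_vector a xA b zB p =
     (case p of Inl x \<Rightarrow> xA x + (if x = a then zB b - 1 else 0) | Inr y \<Rightarrow> zB y)"

lemma wedge_right_inject [simp]: "wedge_right a b u = wedge_right a b v \<longleftrightarrow> u = v"
  unfolding wedge_right_def by auto

lemma wedge_right_self [simp]: "wedge_right a b b = Inl a"
  unfolding wedge_right_def by simp

lemma wedge_right_eq_Inl_iff: "wedge_right a b v = Inl x \<longleftrightarrow> v = b \<and> x = a"
  and Inl_eq_wedge_right_iff: "Inl x = wedge_right a b v \<longleftrightarrow> v = b \<and> x = a"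
  unfolding wedge_right_def by auto

locale wedge =
  fixes VA :: "'a set" and EA a and VB :: "'b set" and EB b
  assumes simple_A: "simple_graph VA EA" and connected_A: "connected_graph VA EA" and a_in: "a \<in> VA"
    and simple_B: "simple_graph VB EB" and connected_B: "connected_graph VB EB" and b_in: "b \<in> VB"
begin

abbreviation "Vw \<equiv> wedge_vertices VA a VB b"
abbreviation "Ew \<equiv> wedge_edges EA a EB b"
abbreviation "j \<equiv> wedge_right a b"

lemma relpowp_wedge_Inl: "(EA^^n) u v \<Longrightarrow> (Ew^^n) (Inl u) (Inl v)"
  by (rule relpowp_map) (auto simp: wedge_edges_def)

lemma relpowp_wedge_right: "(EB^^n) u v \<Longrightarrow> (Ew^^n) (j u) (j v)"
  by (rule relpowp_map) (auto simp: wedge_edges_def)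

lemma wedge_lipschitz:
  assumes "\<forall>p q. EA p q \<longrightarrow> hA q \<le> hA p + 1" "\<forall>p q. EB p q \<longrightarrow> hB q \<le> hB p + (1::nat)"
    and "hA a = hB b"
  shows "\<forall>p q. Ew p q \<longrightarrow> case_sum hA hB q \<le> case_sum hA hB p + 1"
proof (intro allI impI)
  fix p q assume "Ew p q"
  then consider (A) u v where "p = Inl u" "q = Inl v" "EA u v"
    | (B) u v where "p = j u" "q = j v" "EB u v"
    unfolding wedge_edges_def by blast
  then show "case_sum hA hB q \<le> case_sum hA hB p + 1"
  proof cases
    case A thus ?thesis using assms(1) by simp
  next
    case B thus ?thesis using assms(2,3) by (auto simp: wedge_right_def)
  qed
qed

lemma gdist_wedge_Inl:
  assumes s: "s \<in> VA"
  shows "x \<in> VA \<Longrightarrow> gdist Ew (Inl s) (Inl x) = gdist EA s x"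
    and "y \<in> VB \<Longrightarrow> gdist Ew (Inl s) (j y) = gdist EA s a + gdist EB b y"
proof -
  define h where "h = case_sum (gdist EA s) (\<lambda>y. gdist EA s a + gdist EB b y)"
  have lip: "\<forall>p q. Ew p q \<longrightarrow> h q \<le> h p + 1"
    unfolding h_def by (rule wedge_lipschitz)
      (use gdist_lipschitz[OF simple_A connected_A s] gdist_lipschitz[OF simple_B connected_B b_in] in auto)
  show "gdist Ew (Inl s) (Inl x) = gdist EA s x" if x: "x \<in> VA"
    by (rule gdist_eqI[OF relpowp_wedge_Inl[OF connected_graph_relpowp_gdist[OF connected_A s x]] lip])
      (simp add: h_def)
  show "gdist Ew (Inl s) (j y) = gdist EA s a + gdist EB b y" if y: "y \<in> VB"
  proof (rule gdist_eqI[OF _ lip])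
    show "(Ew^^(gdist EA s a + gdist EB b y)) (Inl s) (j y)"
      using relpowp_trans[OF relpowp_wedge_Inl[OF connected_graph_relpowp_gdist[OF connected_A s a_in]]
          relpowp_wedge_right[OF connected_graph_relpowp_gdist[OF connected_B b_in y], unfolded wedge_right_self]] .
  qed (simp add: h_def wedge_right_def)
qed

lemma gdist_wedge_right:
  assumes s: "s \<in> VB"
  shows "y \<in> VB \<Longrightarrow> gdist Ew (j s) (j y) = gdist EB s y"
    and "x \<in> VA \<Longrightarrow> gdist Ew (j s) (Inl x) = gdist EB s b + gdist EA a x"
proof -
  define h where "h = case_sum (\<lambda>x. gdist EB s b + gdist EA a x) (gdist EB s)"
  have lip: "\<forall>p q. Ew p q \<longrightarrow> h q \<le> h p + 1"
    unfolding h_def by (rule wedge_lipschitz)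
      (use gdist_lipschitz[OF simple_A connected_A a_in] gdist_lipschitz[OF simple_B connected_B s] in auto)
  have h_right: "h (j y) = gdist EB s y" for y
    unfolding h_def wedge_right_def by simp
  show "gdist Ew (j s) (j y) = gdist EB s y" if y: "y \<in> VB"
    by (rule gdist_eqI[OF relpowp_wedge_right[OF connected_graph_relpowp_gdist[OF connected_B s y]] lip])
      (simp add: h_right)
  show "gdist Ew (j s) (Inl x) = gdist EB s b + gdist EA a x" if x: "x \<in> VA"
  proof (rule gdist_eqI[OF _ lip])
    show "(Ew^^(gdist EB s b + gdist EA a x)) (j s) (Inl x)"
      using relpowp_trans[OF relpowp_wedge_right[OF connected_graph_relpowp_gdist[OF connected_B s b_in],
            unfolded wedge_right_self]
          relpowp_wedge_Inl[OF connected_graph_relpowp_gdist[OF connected_A a_in x]]] .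
  qed (use h_right[of s] in \<open>simp add: h_def\<close>)
qed

lemma simple_graph_wedge: "simple_graph Vw Ew"
proof -
  have "finite Vw"
    using simple_graph_finite[OF simple_A] simple_graph_finite[OF simple_B]
    unfolding wedge_vertices_def by blast
  moreover have "Ew p q \<Longrightarrow> p \<in> Vw \<and> q \<in> Vw" for p q
    using simple_graph_edgeD[OF simple_A] simple_graph_edgeD[OF simple_B]
    unfolding wedge_edges_def wedge_vertices_def by blast
  moreover have "Ew p q \<Longrightarrow> Ew q p" for p q
    using simple_graph_sym[OF simple_A] simple_graph_sym[OF simple_B]
    unfolding wedge_edges_def by blast
  moreover have "\<not> Ew p p" for p
    using simple_graph_irrefl[OF simple_A] simple_graph_irrefl[OF simple_B]
    unfolding wedge_edges_def by auto
  ultimately show ?thesis unfolding simple_graph_def by blast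
qed

lemma connected_graph_wedge: "connected_graph Vw Ew"
proof -
  have from_a: "Ew\<^sup>*\<^sup>* (Inl a) p" if "p \<in> Vw" for p
    using that relpowp_wedge_Inl[OF connected_graph_relpowp_gdist[OF connected_A a_in]]
      relpowp_wedge_right[OF connected_graph_relpowp_gdist[OF connected_B b_in]]
    unfolding wedge_vertices_def by (fastforce intro: relpowp_imp_rtranclp)
  have "symp Ew\<^sup>*\<^sup>*"
    by (rule symp_rtranclp) (use simple_graph_sym[OF simple_graph_wedge] in \<open>blast intro: sympI\<close>)
  then have to_a: "Ew\<^sup>*\<^sup>* p (Inl a)" if "p \<in> Vw" for p
    using from_a[OF that] by (blast dest: sympD)
  have "Inl a \<in> Vw" using a_in unfolding wedge_vertices_def by blast
  then show ?thesis
    unfolding connected_graph_def using to_a from_a by (blast intro: rtranclp_trans)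
qed

lemma isometric_embedding_wedge: "isometric_embedding VA EA Vw Ew Inl"
  unfolding isometric_embedding_def induced_embedding_def
  using gdist_wedge_Inl(1) simple_graph_edgeD[OF simple_B] simple_graph_irrefl[OF simple_B]
  by (auto simp: wedge_vertices_def wedge_edges_def wedge_right_eq_Inl_iff Inl_eq_wedge_right_iff)

lemma sum_wedge_vector:
  "(\<Sum>p\<in>Vw. f p * wedge_vector a xA b zB p)
     = (\<Sum>x\<in>VA. f (Inl x) * xA x) + (\<Sum>y\<in>VB. f (j y) * zB y) - f (Inl a)"
proof -
  have fin_A: "finite VA" and fin_B: "finite VB"
    using simple_graph_finite simple_A simple_B by blast+
  have U_eq: "Vw = Inl ` VA \<union> Inr ` (VB - {b})"
    using a_in unfolding wedge_vertices_def wedge_right_def by auto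
  have split_U: "(\<Sum>p\<in>Vw. g p) = (\<Sum>x\<in>VA. g (Inl x)) + (\<Sum>y\<in>VB - {b}. g (Inr y))"
    for g :: "'a + 'b \<Rightarrow> real"
    unfolding U_eq using fin_A fin_B by (subst sum.union_disjoint) (auto simp: sum.reindex)
  have "(\<Sum>x\<in>VA. f (Inl x) * (if x = a then zB b - 1 else 0))
      = (\<Sum>x\<in>VA. if x = a then f (Inl a) * (zB b - 1) else 0)"
    by (rule sum.cong) auto
  also have "\<dots> = f (Inl a) * (zB b - 1)" using fin_A a_in by simp
  finally have A: "(\<Sum>x\<in>VA. f (Inl x) * wedge_vector a xA b zB (Inl x))
      = (\<Sum>x\<in>VA. f (Inl x) * xA x) + f (Inl a) * (zB b - 1)"
    by (simp add: wedge_vector_def distrib_left sum.distrib)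
  have "(\<Sum>y\<in>VB. f (j y) * zB y) = f (Inl a) * zB b + (\<Sum>y\<in>VB - {b}. f (j y) * zB y)"
    using sum.remove[OF fin_B b_in, of "\<lambda>y. f (j y) * zB y"] by simp
  also have "(\<Sum>y\<in>VB - {b}. f (j y) * zB y) = (\<Sum>y\<in>VB - {b}. f (Inr y) * zB y)"
    by (rule sum.cong) (auto simp: wedge_right_def)
  finally have B: "(\<Sum>y\<in>VB - {b}. f (Inr y) * wedge_vector a xA b zB (Inr y))
      = (\<Sum>y\<in>VB. f (j y) * zB y) - f (Inl a) * zB b"
    by (simp add: wedge_vector_def)
  show ?thesis unfolding split_U A B by (simp add: algebra_simps)
qed

lemma index_vector_wedge:
  assumes A: "index_vector VA EA tA xA" and B: "index_vector VB EB tB zB"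
  shows "index_vector Vw Ew (tA + tB) (wedge_vector a xA b zB)"
  unfolding index_vector_iff
proof
  have rows_A: "\<And>u. u \<in> VA \<Longrightarrow> (\<Sum>v\<in>VA. real (gdist EA u v) * xA v) = tA"
    and sum_A: "(\<Sum>v\<in>VA. xA v) = 1"
    using A unfolding index_vector_iff by auto
  have rows_B: "\<And>u. u \<in> VB \<Longrightarrow> (\<Sum>v\<in>VB. real (gdist EB u v) * zB v) = tB"
    and sum_B: "(\<Sum>v\<in>VB. zB v) = 1"
    using B unfolding index_vector_iff by auto
  show "(\<Sum>p\<in>Vw. wedge_vector a xA b zB p) = 1"
    using sum_wedge_vector[of "\<lambda>_. 1"] sum_A sum_B by simp
  show "\<forall>p\<in>Vw. (\<Sum>q\<in>Vw. real (gdist Ew p q) * wedge_vector a xA b zB q) = tA + tB"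
  proof
    fix p assume "p \<in> Vw"
    then consider (A) s where "s \<in> VA" "p = Inl s" | (B) s where "s \<in> VB" "p = j s"
      unfolding wedge_vertices_def by blast
    then show "(\<Sum>q\<in>Vw. real (gdist Ew p q) * wedge_vector a xA b zB q) = tA + tB"
    proof cases
      case A
      have "(\<Sum>q\<in>Vw. real (gdist Ew p q) * wedge_vector a xA b zB q)
          = (\<Sum>x\<in>VA. real (gdist EA s x) * xA x)
            + (\<Sum>y\<in>VB. (real (gdist EA s a) + real (gdist EB b y)) * zB y) - real (gdist EA s a)"
        using sum_wedge_vector[of "\<lambda>q. real (gdist Ew p q)"] A gdist_wedge_Inl[OF A(1)] a_in by simp
      also have "\<dots> = tA + real (gdist EA s a) * (\<Sum>y\<in>VB. zB y)
            + (\<Sum>y\<in>VB. real (gdist EB b y) * zB y) - real (gdist EA s a)"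
        using rows_A[OF A(1)] by (simp add: distrib_right sum.distrib sum_distrib_left)
      finally show ?thesis using rows_B[OF b_in] sum_B by simp
    next
      case B
      have "(\<Sum>q\<in>Vw. real (gdist Ew p q) * wedge_vector a xA b zB q)
          = (\<Sum>x\<in>VA. (real (gdist EB s b) + real (gdist EA a x)) * xA x)
            + (\<Sum>y\<in>VB. real (gdist EB s y) * zB y) - real (gdist EB s b)"
        using sum_wedge_vector[of "\<lambda>q. real (gdist Ew p q)"] B gdist_wedge_right[OF B(1)] a_in by simp
      also have "\<dots> = real (gdist EB s b) * (\<Sum>x\<in>VA. xA x)
            + (\<Sum>x\<in>VA. real (gdist EA a x) * xA x) + tB - real (gdist EB s b)"
        using rows_B[OF B(1)] by (simp add: distrib_right sum.distrib sum_distrib_left)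
      finally show ?thesis using rows_A[OF a_in] sum_A by simp
    qed
  qed
qed

end

section \<open>Complete multipartite graphs\<close>

lemma sum_if_eq_else_const:
  assumes "finite A" "i0 \<in> A"
  shows "(\<Sum>i\<in>A. if i = i0 then x else c) = c * (real (card A) - 1) + (x::real)"
proof -
  have "(\<Sum>i\<in>A. if i = i0 then x else c) = x + (\<Sum>i\<in>A - {i0}. if i = i0 then x else c)"
    using sum.remove[OF assms, of "\<lambda>i. if i = i0 then x else c"] by simp
  also have "(\<Sum>i\<in>A - {i0}. if i = i0 then x else c) = (\<Sum>i\<in>A - {i0}. c)"
    by (rule sum.cong) auto
  also have "\<dots> = c * (real (card A) - 1)"
  proof -
    have "card A \<ge> 1" using assms by (auto simp: Suc_le_eq card_gt_0_iff)
    then show ?thesis using assms by (simp add: of_nat_diff)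
  qed
  finally show ?thesis by simp
qed

text \<open>The complete multipartite graph with b singleton parts Inl i and k parts
  {Inr (i, j) | j < m} of size m.\<close>

definition multipartite_vertices :: "nat \<Rightarrow> nat \<Rightarrow> nat \<Rightarrow> (nat + nat \<times> nat) set" where
  "multipartite_vertices b k m = Inl ` {..<b} \<union> Inr ` ({..<k} \<times> {..<m})"

definition same_part :: "nat + nat \<times> nat \<Rightarrow> nat + nat \<times> nat \<Rightarrow> bool" where
  "same_part p q = (case p of
      Inr x \<Rightarrow> (case q of Inr y \<Rightarrow> fst x = fst y | Inl _ \<Rightarrow> False)
    | Inl _ \<Rightarrow> False)"

definition multipartite_edges :: "nat \<Rightarrow> nat \<Rightarrow> nat \<Rightarrow> nat + nat \<times> nat \<Rightarrow> nat + nat \<times> nat \<Rightarrow> bool" where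
  "multipartite_edges b k m p q \<longleftrightarrow>
     p \<in> multipartite_vertices b k m \<and> q \<in> multipartite_vertices b k m \<and> p \<noteq> q \<and> \<not> same_part p q"

definition multipartite_dist :: "nat + nat \<times> nat \<Rightarrow> nat + nat \<times> nat \<Rightarrow> nat" where
  "multipartite_dist p q = (if p = q then 0 else if same_part p q then 2 else 1)"

lemma same_part_sym: "same_part p q = same_part q p"
  unfolding same_part_def by (auto split: sum.splits)

text \<open>The hypothesis b \<ge> 1 \<or> k \<ge> 2 says that there are at least two parts.\<close>

lemma multipartite_common_neighbour:
  assumes "b \<ge> 1 \<or> k \<ge> 2" "p \<in> multipartite_vertices b k m" "q \<in> multipartite_vertices b k m"
    and "same_part p q"
  obtains w where "multipartite_edges b k m p w" "multipartite_edges b k m w q"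
proof -
  obtain i j j' where pq: "p = Inr (i, j)" "q = Inr (i, j')" "i < k" "j < m" "j' < m"
    using assms(2-4) unfolding multipartite_vertices_def same_part_def by (auto split: sum.splits)
  define w :: "nat + nat \<times> nat" where
    "w = (if b \<ge> 1 then Inl 0 else Inr (if i = 0 then 1 else 0, 0))"
  have "w \<in> multipartite_vertices b k m"
    using assms(1) pq unfolding w_def multipartite_vertices_def by auto
  moreover have "\<not> same_part p w" "\<not> same_part w q" "p \<noteq> w" "w \<noteq> q"
    using pq unfolding w_def same_part_def by auto
  ultimately show ?thesis using that assms(2,3) unfolding multipartite_edges_def by blast
qed

lemma gdist_multipartite:
  assumes "b \<ge> 1 \<or> k \<ge> 2" "p \<in> multipartite_vertices b k m" "q \<in> multipartite_vertices b k m"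
  shows "gdist (multipartite_edges b k m) p q = multipartite_dist p q"
proof (cases "p = q")
  case True thus ?thesis by (simp add: multipartite_dist_def)
next
  case False
  show ?thesis
  proof (cases "same_part p q")
    case True
    moreover obtain w where "multipartite_edges b k m p w" "multipartite_edges b k m w q"
      using multipartite_common_neighbour[OF assms True] .
    moreover have "\<not> multipartite_edges b k m p q" using True unfolding multipartite_edges_def by blast
    ultimately show ?thesis using gdist_eq_2 False by (simp add: multipartite_dist_def)
  next
    case not_same: False
    then have "multipartite_edges b k m p q" using assms False unfolding multipartite_edges_def by blast
    then show ?thesis using gdist_edge False not_same by (simp add: multipartite_dist_def)
  qed
qed

lemma simple_graph_multipartite: "simple_graph (multipartite_vertices b k m) (multipartite_edges b k m)"
  unfolding simple_graph_def multipartite_edges_def multipartite_vertices_def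
  using same_part_sym by auto

lemma connected_graph_multipartite:
  assumes "b \<ge> 1 \<or> k \<ge> 2" "k \<ge> 1" "m \<ge> 1"
  shows "connected_graph (multipartite_vertices b k m) (multipartite_edges b k m)"
  unfolding connected_graph_def
proof (intro conjI ballI)
  have "Inr (0, 0) \<in> multipartite_vertices b k m"
    using assms unfolding multipartite_vertices_def by auto
  then show "multipartite_vertices b k m \<noteq> {}" by blast
  fix p q assume pq: "p \<in> multipartite_vertices b k m" "q \<in> multipartite_vertices b k m"
  show "(multipartite_edges b k m)\<^sup>*\<^sup>* p q"
  proof (cases "same_part p q")
    case True
    then obtain w where "multipartite_edges b k m p w" "multipartite_edges b k m w q"
      using multipartite_common_neighbour assms pq by blast
    then show ?thesis by (meson converse_rtranclp_into_rtranclp r_into_rtranclp)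
  next
    case False
    then show ?thesis using pq unfolding multipartite_edges_def by (cases "p = q") auto
  qed
qed

text \<open>The vector with weight \<alpha> on each singleton part and \<beta> on each vertex of a big part;
  the three conditions are its total weight and its rows at the two kinds of vertices.\<close>

lemma index_vector_multipartite:
  assumes parts: "b \<ge> 1 \<or> k \<ge> 2"
    and total: "real b * \<alpha> + real k * real m * \<beta> = 1"
    and row_Inl: "(real b - 1) * \<alpha> + real k * real m * \<beta> = r"
    and row_Inr: "real b * \<alpha> + ((real k - 1) * real m + 2 * (real m - 1)) * \<beta> = r"
  shows "index_vector (multipartite_vertices b k m) (multipartite_edges b k m) r (case_sum (\<lambda>_. \<alpha>) (\<lambda>_. \<beta>))"
  unfolding index_vector_iff
proof
  let ?z = "case_sum (\<lambda>_. \<alpha>) (\<lambda>_. \<beta>) :: nat + nat \<times> nat \<Rightarrow> real"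
  have split: "(\<Sum>v\<in>multipartite_vertices b k m. f v) = (\<Sum>i<b. f (Inl i)) + (\<Sum>i<k. \<Sum>j<m. f (Inr (i, j)))"
    for f :: "_ \<Rightarrow> real"
    unfolding multipartite_vertices_def
    by (subst sum.union_disjoint) (auto simp: sum.reindex sum.cartesian_product)
  show "(\<Sum>v\<in>multipartite_vertices b k m. ?z v) = 1"
    unfolding split using total by simp
  show "\<forall>u\<in>multipartite_vertices b k m.
      (\<Sum>v\<in>multipartite_vertices b k m. real (gdist (multipartite_edges b k m) u v) * ?z v) = r"
  proof
    fix u assume u: "u \<in> multipartite_vertices b k m"
    have "(\<Sum>v\<in>multipartite_vertices b k m. real (gdist (multipartite_edges b k m) u v) * ?z v)
        = (\<Sum>v\<in>multipartite_vertices b k m. real (multipartite_dist u v) * ?z v)"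
      by (rule sum.cong) (use gdist_multipartite[OF parts u] in auto)
    also have "\<dots> = r"
    proof (cases u)
      case (Inl i0)
      then have i0: "i0 < b" using u unfolding multipartite_vertices_def by auto
      have "(\<Sum>i<b. real (multipartite_dist u (Inl i)) * ?z (Inl i)) = (\<Sum>i<b. if i = i0 then 0 else \<alpha>)"
        by (rule sum.cong) (auto simp: Inl multipartite_dist_def same_part_def)
      also have "\<dots> = \<alpha> * (real b - 1)" using sum_if_eq_else_const[of "{..<b}" i0 0 \<alpha>] i0 by simp
      finally show ?thesis
        unfolding split using row_Inl by (simp add: Inl multipartite_dist_def same_part_def algebra_simps)
    next
      case (Inr x)
      obtain i0 j0 where x: "x = (i0, j0)" by force
      then have ij: "i0 < k" "j0 < m" using u Inr unfolding multipartite_vertices_def by auto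
      have part: "(\<Sum>j<m. real (multipartite_dist u (Inr (i, j))) * ?z (Inr (i, j)))
          = (if i = i0 then 2 * \<beta> * (real m - 1) else real m * \<beta>)" for i
      proof (cases "i = i0")
        case True
        have "(\<Sum>j<m. real (multipartite_dist u (Inr (i, j))) * ?z (Inr (i, j)))
            = (\<Sum>j<m. if j = j0 then 0 else 2 * \<beta>)"
          by (rule sum.cong) (auto simp: Inr x True multipartite_dist_def same_part_def)
        also have "\<dots> = 2 * \<beta> * (real m - 1)" using sum_if_eq_else_const[of "{..<m}" j0 0 "2 * \<beta>"] ij by simp
        finally show ?thesis using True by simp
      qed (simp add: Inr x multipartite_dist_def same_part_def)
      have "(\<Sum>i<k. \<Sum>j<m. real (multipartite_dist u (Inr (i, j))) * ?z (Inr (i, j)))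
          = real m * \<beta> * (real k - 1) + 2 * \<beta> * (real m - 1)"
        unfolding part using sum_if_eq_else_const[of "{..<k}" i0 "2 * \<beta> * (real m - 1)" "real m * \<beta>"] ij
        by simp
      then show ?thesis
        unfolding split using row_Inr by (simp add: Inr multipartite_dist_def same_part_def algebra_simps)
    qed
    finally show "(\<Sum>v\<in>multipartite_vertices b k m. real (gdist (multipartite_edges b k m) u v) * ?z v) = r" .
  qed
qed

lemma exists_int_parameters:
  fixes p q :: int
  assumes "q > 0"
  obtains b k :: nat where "b \<ge> 1" "k \<ge> 1" "int k * (q + 1) - int b * q = p"
proof -
  define L where "L = \<bar>p\<bar> + 1"
  have L: "L \<ge> 1" "p + L \<ge> 1" unfolding L_def by simp_all
  have "q * L \<ge> L" using mult_right_mono[of 1 q L] assms L(1) by simp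
  then have "p + q * L \<ge> 1" "p + q * L + L \<ge> 1" using L by linarith+
  then show ?thesis
    using that[of "nat (p + q * L + L)" "nat (p + q * L)"] by (simp add: algebra_simps)
qed

text \<open>Solving the three conditions of the previous lemma for r \<noteq> 1 gives \<alpha> = 1 - r,
  \<beta> = (r - 1) / (m - 2) and k m / (m - 2) - b = 1 / (r - 1); with 1 / (r - 1) = p / q
  and m = 2 q + 2 the last equation becomes k (q + 1) - b q = p.\<close>

lemma exists_multipartite_index_vector:
  assumes "r \<in> \<rat>"
  obtains b k m z where "b \<ge> 1 \<or> k \<ge> 2" "k \<ge> 1" "m \<ge> 1"
    "index_vector (multipartite_vertices b k m) (multipartite_edges b k m) r z"
proof (cases "r = 1")
  case True
  show ?thesis
    by (rule that[of 0 2 2], simp_all, rule index_vector_multipartite[where \<alpha> = 0 and \<beta> = "1/4"])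
      (simp_all add: True)
next
  case False
  have "1 / (r - 1) \<in> \<rat>" using assms by simp
  then obtain p q :: int where q: "q > 0" and pq: "1 / (r - 1) = of_int p / of_int q"
    by (rule Rats_cases') blast
  obtain b k where bk: "b \<ge> 1" "k \<ge> 1" "int k * (q + 1) - int b * q = p"
    using exists_int_parameters[OF q] by blast
  define m where "m = nat (2 * q + 2)"
  have m: "real m = 2 * of_int q + 2" using q by (simp add: m_def)
  have p: "of_int p = of_int q / (r - 1)" using pq False q by (simp add: field_simps)
  have bk_real: "real k * (of_int q + 1) - real b * of_int q = of_int q / (r - 1)"
    using arg_cong[OF bk(3), of real_of_int] p by simp
  define \<alpha> where "\<alpha> = 1 - r"
  define \<beta> where "\<beta> = (r - 1) / (2 * of_int q)"
  have total: "real b * \<alpha> + real k * real m * \<beta> = 1"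
  proof -
    have "real b * \<alpha> + real k * real m * \<beta>
        = (r - 1) * (real k * (of_int q + 1) - real b * of_int q) / of_int q"
      unfolding m \<alpha>_def \<beta>_def using q by (simp add: field_simps)
    then show ?thesis unfolding bk_real using False q by simp
  qed
  have "(real m - 2) * \<beta> = r - 1" unfolding m \<beta>_def using q by (simp add: field_simps)
  then show ?thesis
    using that[of b k m] bk index_vector_multipartite[of b k \<alpha> m \<beta> r] total q
    by (simp add: \<alpha>_def m_def algebra_simps)
qed

section \<open>Adding universal vertices\<close>

definition apex_vertices :: "'a set \<Rightarrow> nat \<Rightarrow> ('a + nat) set" where
  "apex_vertices V k = Inl ` V \<union> Inr ` {..<k}"

definition apex_edges :: "('a \<Rightarrow> 'a \<Rightarrow> bool) \<Rightarrow> 'a set \<Rightarrow> nat \<Rightarrow> 'a + nat \<Rightarrow> 'a + nat \<Rightarrow> bool" where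
  "apex_edges E V k p q = (case p of
      Inl u \<Rightarrow> (case q of Inl v \<Rightarrow> E u v | Inr j \<Rightarrow> u \<in> V \<and> j < k)
    | Inr i \<Rightarrow> (case q of Inl v \<Rightarrow> v \<in> V \<and> i < k | Inr j \<Rightarrow> i < k \<and> j < k \<and> i \<noteq> j))"

definition capped_dist :: "('a \<Rightarrow> 'a \<Rightarrow> bool) \<Rightarrow> 'a \<Rightarrow> 'a \<Rightarrow> real" where
  "capped_dist E u v = (if u = v then 0 else if E u v then 1 else 2)"

context
  fixes V :: "'a set" and E k
  assumes simple: "simple_graph V E" and k: "k \<ge> (1::nat)"
begin

lemma simple_graph_apex: "simple_graph (apex_vertices V k) (apex_edges E V k)"
proof -
  have "finite (apex_vertices V k)"
    using simple_graph_finite[OF simple] unfolding apex_vertices_def by blast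
  moreover have "apex_edges E V k p q \<Longrightarrow> p \<in> apex_vertices V k \<and> q \<in> apex_vertices V k" for p q
    unfolding apex_edges_def apex_vertices_def
    using simple_graph_edgeD[OF simple] by (auto split: sum.splits)
  moreover have "apex_edges E V k p q \<Longrightarrow> apex_edges E V k q p" for p q
    unfolding apex_edges_def using simple_graph_sym[OF simple] by (auto split: sum.splits)
  moreover have "\<not> apex_edges E V k p p" for p
    unfolding apex_edges_def using simple_graph_irrefl[OF simple] by (auto split: sum.splits)
  ultimately show ?thesis unfolding simple_graph_def by blast
qed

lemma connected_graph_apex: "connected_graph (apex_vertices V k) (apex_edges E V k)"
  unfolding connected_graph_def
proof (intro conjI ballI)
  have hub: "apex_edges E V k p (Inr 0) \<and> apex_edges E V k (Inr 0) p"
    if "p \<in> apex_vertices V k" "p \<noteq> Inr 0" for p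
    using that k unfolding apex_vertices_def apex_edges_def by auto
  have "Inr 0 \<in> apex_vertices V k" using k unfolding apex_vertices_def by auto
  then show "apex_vertices V k \<noteq> {}" by blast
  fix p q assume "p \<in> apex_vertices V k" "q \<in> apex_vertices V k"
  then have "(apex_edges E V k)\<^sup>*\<^sup>* p (Inr 0)" "(apex_edges E V k)\<^sup>*\<^sup>* (Inr 0) q"
    using hub by (metis r_into_rtranclp rtranclp.rtrancl_refl)+
  then show "(apex_edges E V k)\<^sup>*\<^sup>* p q" by (rule rtranclp_trans)
qed

lemma induced_embedding_apex: "induced_embedding V E (apex_vertices V k) (apex_edges E V k) Inl"
  unfolding induced_embedding_def apex_vertices_def apex_edges_def by auto

lemma gdist_apex_Inl_Inl:
  assumes "u \<in> V" "v \<in> V"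
  shows "real (gdist (apex_edges E V k) (Inl u) (Inl v)) = capped_dist E u v"
proof -
  have "gdist (apex_edges E V k) (Inl u) (Inl v) = 2" if "u \<noteq> v" "\<not> E u v"
    by (rule gdist_eq_2[of _ _ "Inr 0"]) (use assms k that in \<open>auto simp: apex_edges_def\<close>)
  moreover have "gdist (apex_edges E V k) (Inl u) (Inl v) = 1" if "u \<noteq> v" "E u v"
    by (rule gdist_edge) (use that in \<open>auto simp: apex_edges_def\<close>)
  ultimately show ?thesis unfolding capped_dist_def by simp
qed

lemma gdist_apex_Inr_Inl: "v \<in> V \<Longrightarrow> i < k \<Longrightarrow> gdist (apex_edges E V k) (Inr i) (Inl v) = 1"
  by (rule gdist_edge) (auto simp: apex_edges_def)

lemma gdist_apex_Inl_Inr: "v \<in> V \<Longrightarrow> i < k \<Longrightarrow> gdist (apex_edges E V k) (Inl v) (Inr i) = 1"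
  by (rule gdist_edge) (auto simp: apex_edges_def)

lemma gdist_apex_Inr_Inr:
  "i < k \<Longrightarrow> j < k \<Longrightarrow> gdist (apex_edges E V k) (Inr i) (Inr j) = (if i = j then 0 else 1)"
proof (cases "i = j")
  case False
  assume "i < k" "j < k"
  then have "gdist (apex_edges E V k) (Inr i) (Inr j) = 1"
    using False by (intro gdist_edge) (auto simp: apex_edges_def)
  then show ?thesis using False by simp
qed simp

lemma sum_apex_vertices:
  "(\<Sum>p\<in>apex_vertices V k. f p) = (\<Sum>u\<in>V. f (Inl u)) + (\<Sum>i<k. f (Inr i))"
  unfolding apex_vertices_def using simple_graph_finite[OF simple]
  by (subst sum.union_disjoint) (auto simp: sum.reindex)

lemma apex_row_Inr:
  assumes "i < k"
  shows "(\<Sum>p\<in>apex_vertices V k. real (gdist (apex_edges E V k) (Inr i) p) * x p)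
    = (\<Sum>u\<in>V. x (Inl u)) + (\<Sum>j<k. x (Inr j)) - x (Inr i)"
proof -
  have "(\<Sum>u\<in>V. real (gdist (apex_edges E V k) (Inr i) (Inl u)) * x (Inl u)) = (\<Sum>u\<in>V. x (Inl u))"
    by (rule sum.cong) (simp_all add: gdist_apex_Inr_Inl assms)
  moreover have "(\<Sum>j<k. real (gdist (apex_edges E V k) (Inr i) (Inr j)) * x (Inr j))
      = (\<Sum>j<k. x (Inr j) - (if j = i then x (Inr j) else 0))"
    by (rule sum.cong) (simp_all add: gdist_apex_Inr_Inr assms)
  moreover have "\<dots> = (\<Sum>j<k. x (Inr j)) - x (Inr i)"
    using assms by (simp add: sum_subtractf)
  ultimately show ?thesis unfolding sum_apex_vertices by simp
qed

lemma apex_row_Inl: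
  assumes "v \<in> V"
  shows "(\<Sum>p\<in>apex_vertices V k. real (gdist (apex_edges E V k) (Inl v) p) * x p)
    = (\<Sum>u\<in>V. capped_dist E v u * x (Inl u)) + (\<Sum>j<k. x (Inr j))"
proof -
  have "(\<Sum>u\<in>V. real (gdist (apex_edges E V k) (Inl v) (Inl u)) * x (Inl u))
      = (\<Sum>u\<in>V. capped_dist E v u * x (Inl u))"
    by (rule sum.cong) (simp_all add: gdist_apex_Inl_Inl assms)
  moreover have "(\<Sum>j<k. real (gdist (apex_edges E V k) (Inl v) (Inr j)) * x (Inr j)) = (\<Sum>j<k. x (Inr j))"
    by (rule sum.cong) (simp_all add: gdist_apex_Inl_Inr assms)
  ultimately show ?thesis unfolding sum_apex_vertices by simp
qed

text \<open>The rows at the new vertices force x = -1 there.\<close>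

lemma apex_potential_sum_zero:
  assumes x: "curvature_potential (apex_vertices V k) (apex_edges E V k) x"
    and zero: "(\<Sum>p\<in>apex_vertices V k. x p) = 0"
  shows "(\<Sum>u\<in>V. x (Inl u)) = real k"
    and "v \<in> V \<Longrightarrow> (\<Sum>u\<in>V. capped_dist E v u * x (Inl u)) = 1 + real k"
proof -
  have rows: "(\<Sum>q\<in>apex_vertices V k. real (gdist (apex_edges E V k) p q) * x q) = 1"
    if "p \<in> apex_vertices V k" for p
    using x that unfolding curvature_potential_iff by blast
  have total: "(\<Sum>u\<in>V. x (Inl u)) + (\<Sum>j<k. x (Inr j)) = 0"
    using zero unfolding sum_apex_vertices .
  have apex_values: "x (Inr i) = -1" if "i < k" for i
    using rows[of "Inr i"] apex_row_Inr[OF that, of x] total that unfolding apex_vertices_def by auto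
  have "(\<Sum>j<k. x (Inr j)) = (\<Sum>j<k. -1)" by (rule sum.cong) (simp_all add: apex_values)
  then have apex_sum: "(\<Sum>j<k. x (Inr j)) = - real k" by simp
  then show "(\<Sum>u\<in>V. x (Inl u)) = real k" using total by simp
  assume "v \<in> V"
  then show "(\<Sum>u\<in>V. capped_dist E v u * x (Inl u)) = 1 + real k"
    using rows[of "Inl v"] apex_row_Inl[of v x] apex_sum unfolding apex_vertices_def by auto
qed

end

text \<open>If both apex graphs with k = 1 and k = 2 had only zero-sum potentials, the restrictions a
  and c of these potentials to G would satisfy sum a = 1, C a = 2 and sum c = 2, C c = 3 for the
  symmetric matrix C of capped distances; then 4 = c' C a = a' C c = 3.\<close>

lemma curvature_index_apex_finite:
  assumes simple: "simple_graph V E"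
  shows "\<exists>k\<ge>1. curvature_index (apex_vertices V k) (apex_edges E V k) < \<infinity>"
proof (rule ccontr)
  assume "\<not> ?thesis"
  then have "\<exists>x. curvature_potential (apex_vertices V k) (apex_edges E V k) x
      \<and> (\<Sum>p\<in>apex_vertices V k. x p) = 0" if "k \<ge> 1" for k
    using that unfolding curvature_index_less_infinity_iff distance_exceptional_def by blast
  then obtain x1 x2 where
    x1: "curvature_potential (apex_vertices V 1) (apex_edges E V 1) x1" "(\<Sum>p\<in>apex_vertices V 1. x1 p) = 0" and
    x2: "curvature_potential (apex_vertices V 2) (apex_edges E V 2) x2" "(\<Sum>p\<in>apex_vertices V 2. x2 p) = 0"
    by (metis one_le_numeral order.refl)
  define a where "a = (\<lambda>u. x1 (Inl u))"
  define c where "c = (\<lambda>u. x2 (Inl u))"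
  have a: "(\<Sum>u\<in>V. a u) = 1" "\<And>v. v \<in> V \<Longrightarrow> (\<Sum>u\<in>V. capped_dist E v u * a u) = 2"
    using apex_potential_sum_zero[OF simple _ x1] unfolding a_def by auto
  have c: "(\<Sum>u\<in>V. c u) = 2" "\<And>v. v \<in> V \<Longrightarrow> (\<Sum>u\<in>V. capped_dist E v u * c u) = 3"
    using apex_potential_sum_zero[OF simple _ x2] unfolding c_def by auto
  have "(\<Sum>v\<in>V. c v * (\<Sum>u\<in>V. capped_dist E v u * a u)) = (\<Sum>v\<in>V. c v * 2)"
    by (rule sum.cong) (simp_all add: a(2))
  also have "\<dots> = 4" using c(1) by (simp add: sum_distrib_right[symmetric])
  finally have "(\<Sum>v\<in>V. c v * (\<Sum>u\<in>V. capped_dist E v u * a u)) = 4" .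
  moreover have "(\<Sum>u\<in>V. a u * (\<Sum>v\<in>V. capped_dist E u v * c v)) = (\<Sum>u\<in>V. a u * 3)"
    by (rule sum.cong) (simp_all add: c(2))
  moreover have "\<dots> = 3" using a(1) by (simp add: sum_distrib_right[symmetric])
  moreover have "(\<Sum>v\<in>V. c v * (\<Sum>u\<in>V. capped_dist E v u * a u))
      = (\<Sum>u\<in>V. a u * (\<Sum>v\<in>V. capped_dist E u v * c v))"
    by (rule sum_bilinear_sym) (use simple_graph_sym[OF simple] in \<open>auto simp: capped_dist_def\<close>)
  ultimately show False by simp
qed

lemma exists_exceptional_isometric_extension:
  assumes simple: "simple_graph V E" and connected: "connected_graph V E"
    and index: "curvature_index V E < \<infinity>"
  obtains W :: "nat set" and F f where "simple_graph W F" "connected_graph W F"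
    "distance_exceptional W F" "isometric_embedding V E W F f"
proof (cases "distance_exceptional V E")
  case True
  then show ?thesis using exists_nat_copy[OF simple] connected that by metis
next
  case False
  then obtain x where x: "curvature_potential V E x" and nonzero: "(\<Sum>v\<in>V. x v) \<noteq> 0"
    using index unfolding curvature_index_less_infinity_iff by blast
  define s where "s = (\<Sum>v\<in>V. x v)"
  have w: "index_vector V E (1 / s) (\<lambda>v. x v / s)"
    using index_vector_of_potential[OF x s_def[symmetric]] nonzero unfolding s_def by blast
  have "- (1 / s) \<in> \<rat>" using curvature_potential_sum_rational[OF simple x] unfolding s_def by simp
  then obtain b k m z where parts: "b \<ge> 1 \<or> k \<ge> 2" "k \<ge> 1" "m \<ge> 1"
    and z: "index_vector (multipartite_vertices b k m) (multipartite_edges b k m) (- (1 / s)) z"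
    by (rule exists_multipartite_index_vector)
  obtain a where a: "a \<in> V" using connected unfolding connected_graph_def by blast
  have "Inr (0, 0) \<in> multipartite_vertices b k m"
    using parts unfolding multipartite_vertices_def by auto
  then interpret wedge V E a "multipartite_vertices b k m" "multipartite_edges b k m" "Inr (0, 0)"
    using simple connected a simple_graph_multipartite connected_graph_multipartite[OF parts]
    by unfold_locales
  have "index_vector Vw Ew 0 (wedge_vector a (\<lambda>v. x v / s) (Inr (0, 0)) z)"
    using index_vector_wedge[OF w z] by simp
  then have "distance_exceptional Vw Ew"
    by (rule index_vector_0_imp_distance_exceptional[OF simple_graph_wedge])
  with connected_graph_wedge isometric_embedding_comp[OF isometric_embedding_wedge] that
  show ?thesis by (metis exists_nat_copy[OF simple_graph_wedge])
qed

theorem theorem5p3: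
  fixes V :: "'a set" and E :: "'a \<Rightarrow> 'a \<Rightarrow> bool"
  assumes "simple_graph V E"
  shows "(\<exists>(V'' :: nat set) E'' f. simple_graph V'' E'' \<and> connected_graph V'' E''
             \<and> distance_exceptional V'' E'' \<and> induced_embedding V E V'' E'' f)
       \<and> (connected_graph V E \<and> curvature_index V E < \<infinity> \<longrightarrow>
           (\<exists>(V'' :: nat set) E'' f. simple_graph V'' E'' \<and> connected_graph V'' E''
             \<and> distance_exceptional V'' E'' \<and> induced_embedding V E V'' E'' f
             \<and> (\<forall>u\<in>V. \<forall>v\<in>V. gdist E'' (f u) (f v) = gdist E u v)))"
proof (intro conjI impI)
  obtain k where k: "k \<ge> 1" and "curvature_index (apex_vertices V k) (apex_edges E V k) < \<infinity>"
    using curvature_index_apex_finite[OF assms] by blast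
  then obtain W :: "nat set" and F f where "simple_graph W F" "connected_graph W F"
    "distance_exceptional W F" "isometric_embedding (apex_vertices V k) (apex_edges E V k) W F f"
    using exists_exceptional_isometric_extension simple_graph_apex[OF assms k]
      connected_graph_apex[OF assms k] by metis
  then show "\<exists>(V'' :: nat set) E'' f. simple_graph V'' E'' \<and> connected_graph V'' E''
      \<and> distance_exceptional V'' E'' \<and> induced_embedding V E V'' E'' f"
    using induced_embedding_comp[OF induced_embedding_apex[OF assms k]]
    unfolding isometric_embedding_def by blast
next
  assume "connected_graph V E \<and> curvature_index V E < \<infinity>"
  then show "\<exists>(V'' :: nat set) E'' f. simple_graph V'' E'' \<and> connected_graph V'' E''
      \<and> distance_exceptional V'' E'' \<and> induced_embedding V E V'' E'' f
      \<and> (\<forall>u\<in>V. \<forall>v\<in>V. gdist E'' (f u) (f v) = gdist E u v)"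
    using exists_exceptional_isometric_extension[OF assms] unfolding isometric_embedding_def by metis
qed

end
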